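(* For every composition $p=(p_1,\ldots,p_\ell)$ of positive integers, let $B_p 1=B_{p_1}B_{p_2}\cdots B_{p_\ell}\,1$. Then $$B_p1\Big|_{q\to 1+q}\;=\;\sum_{\mu\vdash |p|} P_\mu(q)\,e_\mu[X]$$ for some polynomials $P_\mu(q)$ with nonnegative integer coefficients. Here $|p|=p_1+\cdots+p_\ell$.
   Context: For an integer $a\ge1$, the modified Hall–Littlewood operator $B_a$ acts on symmetric functions $F[X]$ (with coefficients in $\mathbb{Q}[q]$) by $$B_aF[X]=F\Big[X+\epsilon\frac{1-q}{z}\Big]\sum_{r\ge0}z^re_r[X]\Big|_{z^a},$$ where $|_{z^a}$ denotes taking the coefficient of $z^a$. The brackets denote plethystic substitution, and $\epsilon$ is the plethystic variable with $p_k[\epsilon]=(-1)^k$. Thus $p_k[X+\epsilon\frac{1-q}{z}]=p_k[X]+(-1)^k\frac{1-q^k}{z^k}$. Equivalently, $$B_a=\sum_{r,s\ge0}(-1)^sq^r\,e_{a+r+s}\,e_r^\perp h_s^\perp,$$ where $e_{a+r+s}$ acts by multiplication and $f^\perp$ is the adjoint of multiplication by $f$ under the Hall scalar product. The notation $|_{q\to 1+q}$ means substituting $1+q$ for $q$. *)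

theory Defs
  imports "HOL-Library.Poly_Mapping" "HOL-Computational_Algebra.Polynomial" "HOL-Library.Multiset"
begin

text \<open>Symmetric functions over Q[q], realised as the free polynomial algebra
  Q[q][p_1, p_2, ...] in the power sums. A monomial p^alpha is indexed by
  alpha :: nat =>0 nat (alpha k = exponent of p_k).\<close>

type_synonym sym = "(nat \<Rightarrow>\<^sub>0 nat) \<Rightarrow>\<^sub>0 rat poly"

definition sconst :: "rat poly \<Rightarrow> sym" where
  "sconst c = Poly_Mapping.single 0 c"

definition pvar :: "nat \<Rightarrow> sym" where
  "pvar k = Poly_Mapping.single (Poly_Mapping.single k 1) 1"

text \<open>Elementary symmetric functions via Newton's identities:
  r e_r = sum_{i=1..r} (-1)^(i-1) e_{r-i} p_i.\<close>
function esym :: "nat \<Rightarrow> sym" where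
  "esym r = (if r = 0 then 1 else
     sconst [:1 / of_nat r:] *
       (\<Sum>i\<in>{1..r}. sconst [:(-1) ^ (i - 1):] * esym (r - i) * pvar i))"
  by auto
termination
  by (relation "measure id") auto

declare esym.simps [simp del]

definition emult :: "nat multiset \<Rightarrow> sym" where
  "emult mu = prod_mset (image_mset esym mu)"

definition partitions :: "nat \<Rightarrow> nat multiset set" where
  "partitions n = {mu. (\<forall>x\<in>#mu. 0 < x) \<and> sum_mset mu = n}"

text \<open>Plethystic substitution F[X + epsilon (1-q)/z], written as a polynomial
  in w = 1/z with coefficients in Lambda:
  p_k |-> p_k + (-1)^k (1 - q^k) w^k.\<close>
definition pleth_shift_var :: "nat \<Rightarrow> sym poly" where
  "pleth_shift_var k =
     [:pvar k:] + monom (sconst (smult ((-1) ^ k) (1 - [:0, 1:] ^ k))) k"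

definition pleth_shift :: "sym \<Rightarrow> sym poly" where
  "pleth_shift F =
     (\<Sum>alpha\<in>Poly_Mapping.keys F.
        [:sconst (Poly_Mapping.lookup F alpha):] *
        (\<Prod>k\<in>Poly_Mapping.keys alpha. pleth_shift_var k ^ Poly_Mapping.lookup alpha k))"

text \<open>B_a F = F[X + eps (1-q)/z] * sum_r z^r e_r |_{z^a}
  = sum_j (coefficient of z^{-j}) * e_{a+j}.\<close>
definition Bop :: "nat \<Rightarrow> sym \<Rightarrow> sym" where
  "Bop a F = (let G = pleth_shift F in
     (\<Sum>j\<le>degree G. coeff G j * esym (a + j)))"

definition Bcomp :: "nat list \<Rightarrow> sym" where
  "Bcomp p = foldr Bop p 1"

definition qshift :: "sym \<Rightarrow> sym" where
  "qshift F = Poly_Mapping.map (\<lambda>c. pcompose c [:1, 1:]) F"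

end

theory Submission
  imports Defs "HOL-Computational_Algebra.Formal_Power_Series"
begin

text \<open>After \<open>q \<mapsto> 1 + q\<close>, the plethystic shift \<open>p\<^sub>k \<mapsto> p\<^sub>k + (-1)^k (1 - q^k) w^k\<close>
  (with \<open>w = 1/z\<close>) is a ring homomorphism \<open>\<Lambda> \<rightarrow> \<Lambda>[w]\<close>. Comparing Newton's identities on both
  sides, it sends \<open>e\<^sub>m\<close> to \<open>\<Sum>\<^sub>k e\<^sub>k c\<^sub>m\<^sub>-\<^sub>k w^(m-k)\<close>, where \<open>\<Sum>\<^sub>j c\<^sub>j t^j = (1 - t) / (1 - (1 + q) t)\<close>,
  i.e. \<open>c\<^sub>0 = 1\<close> and \<open>c\<^sub>j = q (1 + q)^(j-1)\<close>, which lie in \<open>\<nat>[q]\<close>. Hence an \<open>\<nat>[q]\<close>-combination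
  of the \<open>e\<^sub>\<mu>\<close> with \<open>|\<mu>| = n\<close> is sent to a polynomial in \<open>w\<close> whose coefficient of \<open>w^j\<close> is such
  a combination of degree \<open>n - j\<close>. As \<open>q \<mapsto> 1 + q\<close> fixes the \<open>e\<^sub>r\<close>, \<open>B\<^sub>a F\<close> pairs these
  coefficients with \<open>e\<^sub>a\<^sub>+\<^sub>j\<close>, so it is again such a combination, of degree \<open>a + n\<close>; induction over
  the composition finishes the proof.\<close>

locale comm_ring_hom =
  fixes h :: "'a::comm_ring_1 \<Rightarrow> 'b::comm_ring_1"
  assumes hom_add: "h (x + y) = h x + h y"
    and hom_mult: "h (x * y) = h x * h y"
    and hom_one: "h 1 = 1"
begin

lemma hom_zero: "h 0 = 0"
  using hom_add[of 0 0] by simp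

lemma hom_sum: "h (sum f A) = (\<Sum>a\<in>A. h (f a))"
  by (induction A rule: infinite_finite_induct) (auto simp: hom_zero hom_add)

lemma hom_prod: "h (prod f A) = (\<Prod>a\<in>A. h (f a))"
  by (induction A rule: infinite_finite_induct) (auto simp: hom_one hom_mult)

lemma hom_power: "h (x ^ n) = h x ^ n"
  by (induction n) (auto simp: hom_one hom_mult)

lemma hom_uminus: "h (- x) = - h x"
  using hom_add[of x "- x"] by (simp add: hom_zero add_eq_0_iff2)

lemma hom_of_nat: "h (of_nat n) = of_nat n"
  by (induction n) (auto simp: hom_zero hom_one hom_add)

lemma hom_prod_mset: "h (prod_mset M) = prod_mset (image_mset h M)"
  by (induction M) (auto simp: hom_one hom_mult)

end

lemma comm_ring_hom_map_poly:
  assumes "comm_ring_hom h"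
  shows "comm_ring_hom (map_poly h)"
proof -
  interpret h: comm_ring_hom h by fact
  show ?thesis
    by unfold_locales
      (simp_all add: poly_eq_iff coeff_map_poly h.hom_zero h.hom_add h.hom_one
        coeff_mult coeff_1 h.hom_sum h.hom_mult)
qed

interpretation const_poly: comm_ring_hom "\<lambda>x::'a::comm_ring_1. [:x:]"
  by unfold_locales (simp_all add: one_pCons)

interpretation pcompose: comm_ring_hom "\<lambda>p::'a::comm_ring_1 poly. pcompose p q"
  by unfold_locales (simp_all add: pcompose_add pcompose_mult pcompose_1)

lemma comm_ring_hom_comp: "comm_ring_hom f \<Longrightarrow> comm_ring_hom g \<Longrightarrow> comm_ring_hom (g \<circ> f)"
  unfolding comm_ring_hom_def by auto

lemma of_nat_mult_cancel_by_hom: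
  fixes h :: "'a::field_char_0 \<Rightarrow> 'b::comm_ring_1" and x y :: 'b
  assumes "comm_ring_hom h" "0 < k" "of_nat k * x = of_nat k * y"
  shows "x = y"
proof -
  interpret comm_ring_hom h by fact
  have "h (inverse (of_nat k)) * of_nat k = h (inverse (of_nat k) * of_nat k)"
    by (simp add: hom_mult hom_of_nat)
  also have "\<dots> = 1"
    using assms(2) by (simp add: hom_one)
  finally have inverse: "h (inverse (of_nat k)) * of_nat k = 1" .
  then have "x = h (inverse (of_nat k)) * (of_nat k * x)"
    by (simp flip: mult.assoc)
  then show ?thesis
    by (simp add: assms(3) inverse flip: mult.assoc)
qed

section \<open>Evaluating polynomials in the power sums\<close>

lemma poly_mapping_add_single_induct [case_names zero add_single]:
  fixes P :: "('a \<Rightarrow>\<^sub>0 'b::monoid_add) \<Rightarrow> bool"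
  assumes "P 0" "\<And>f a b. P f \<Longrightarrow> P (f + Poly_Mapping.single a b)"
  shows "P f"
proof (induction f rule: update_induct)
  case (update f a b)
  then have "Poly_Mapping.update a b f = f + Poly_Mapping.single a b"
    by (intro poly_mapping_eqI) (auto simp: lookup_update lookup_add lookup_single when_def in_keys_iff)
  with update show ?case
    using assms(2) by simp
qed (fact assms(1))

lemma mult_hom_from_single:
  fixes h :: "('a::comm_monoid_add \<Rightarrow>\<^sub>0 'r::comm_ring_1) \<Rightarrow> 'b::comm_ring_1"
  assumes add: "\<And>x y. h (x + y) = h x + h y"
    and single: "\<And>a b c d. h (Poly_Mapping.single a c * Poly_Mapping.single b d) =
                   h (Poly_Mapping.single a c) * h (Poly_Mapping.single b d)"
  shows "h (x * y) = h x * h y"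
proof -
  have zero: "h 0 = 0"
    using add[of 0 0] by simp
  have "h (Poly_Mapping.single a c * y) = h (Poly_Mapping.single a c) * h y" for a c y
    by (induction y rule: poly_mapping_add_single_induct) (auto simp: zero add single distrib_left)
  then show ?thesis
    by (induction x rule: poly_mapping_add_single_induct) (auto simp: zero add distrib_right)
qed

definition monomial_eval :: "(nat \<Rightarrow> 'b::comm_ring_1) \<Rightarrow> (nat \<Rightarrow>\<^sub>0 nat) \<Rightarrow> 'b" where
  "monomial_eval v alpha = (\<Prod>k\<in>Poly_Mapping.keys alpha. v k ^ Poly_Mapping.lookup alpha k)"

definition pm_eval ::
    "('r::zero \<Rightarrow> 'b::comm_ring_1) \<Rightarrow> (nat \<Rightarrow> 'b) \<Rightarrow> ((nat \<Rightarrow>\<^sub>0 nat) \<Rightarrow>\<^sub>0 'r) \<Rightarrow> 'b" where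
  "pm_eval c v F = (\<Sum>alpha\<in>Poly_Mapping.keys F. c (Poly_Mapping.lookup F alpha) * monomial_eval v alpha)"

lemma monomial_eval_superset:
  assumes "finite S" "Poly_Mapping.keys alpha \<subseteq> S"
  shows "monomial_eval v alpha = (\<Prod>k\<in>S. v k ^ Poly_Mapping.lookup alpha k)"
  unfolding monomial_eval_def
  by (rule prod.mono_neutral_left) (use assms in \<open>auto simp: in_keys_iff\<close>)

lemma monomial_eval_zero [simp]: "monomial_eval v 0 = 1"
  by (simp add: monomial_eval_def)

lemma monomial_eval_add: "monomial_eval v (alpha + beta) = monomial_eval v alpha * monomial_eval v beta"
proof -
  let ?S = "Poly_Mapping.keys alpha \<union> Poly_Mapping.keys beta"
  have "monomial_eval v (alpha + beta) = (\<Prod>k\<in>?S. v k ^ Poly_Mapping.lookup (alpha + beta) k)"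
    by (rule monomial_eval_superset) (simp_all add: Poly_Mapping.keys_add)
  also have "\<dots> = (\<Prod>k\<in>?S. v k ^ Poly_Mapping.lookup alpha k) * (\<Prod>k\<in>?S. v k ^ Poly_Mapping.lookup beta k)"
    by (simp add: lookup_add power_add prod.distrib)
  also have "\<dots> = monomial_eval v alpha * monomial_eval v beta"
    by (simp add: monomial_eval_superset[of ?S])
  finally show ?thesis .
qed

lemma (in comm_ring_hom) hom_monomial_eval: "h (monomial_eval v alpha) = monomial_eval (h \<circ> v) alpha"
  by (simp add: monomial_eval_def hom_prod hom_power)

lemma pm_eval_superset:
  assumes "c 0 = 0" "finite S" "Poly_Mapping.keys F \<subseteq> S"
  shows "pm_eval c v F = (\<Sum>alpha\<in>S. c (Poly_Mapping.lookup F alpha) * monomial_eval v alpha)"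
  unfolding pm_eval_def
  by (rule sum.mono_neutral_left) (use assms in \<open>auto simp: in_keys_iff\<close>)

lemma pm_eval_single:
  "c 0 = 0 \<Longrightarrow> pm_eval c v (Poly_Mapping.single alpha x) = c x * monomial_eval v alpha"
  by (cases "x = 0") (auto simp: pm_eval_def)

lemma comm_ring_hom_pm_eval:
  assumes "comm_ring_hom c"
  shows "comm_ring_hom (pm_eval c v)"
proof -
  interpret c: comm_ring_hom c by fact
  have add: "pm_eval c v (F + G) = pm_eval c v F + pm_eval c v G" for F G
  proof -
    let ?S = "Poly_Mapping.keys F \<union> Poly_Mapping.keys G"
    have "\<And>H. Poly_Mapping.keys H \<subseteq> ?S \<Longrightarrow>
        pm_eval c v H = (\<Sum>alpha\<in>?S. c (Poly_Mapping.lookup H alpha) * monomial_eval v alpha)"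
      by (rule pm_eval_superset) (simp_all add: c.hom_zero)
    then show ?thesis
      by (simp add: Poly_Mapping.keys_add lookup_add c.hom_add distrib_right sum.distrib)
  qed
  show ?thesis
  proof
    show "pm_eval c v (F + G) = pm_eval c v F + pm_eval c v G" for F G
      by (fact add)
    show "pm_eval c v (F * G) = pm_eval c v F * pm_eval c v G" for F G
      by (rule mult_hom_from_single)
        (simp_all add: add mult_single pm_eval_single c.hom_zero c.hom_mult monomial_eval_add mult_ac)
    show "pm_eval c v 1 = 1"
      using pm_eval_single[of c v 0 1] by (simp add: c.hom_zero c.hom_one)
  qed
qed

lemma (in comm_ring_hom) hom_pm_eval: "h (pm_eval c v F) = pm_eval (h \<circ> c) (h \<circ> v) F"
  by (simp add: pm_eval_def hom_sum hom_mult hom_monomial_eval)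

lemma lookup_map: "g 0 = 0 \<Longrightarrow> Poly_Mapping.lookup (Poly_Mapping.map g F) x = g (Poly_Mapping.lookup F x)"
  by transfer (auto simp: when_def)

lemma keys_map_subset: "Poly_Mapping.keys (Poly_Mapping.map g F) \<subseteq> Poly_Mapping.keys F"
  by transfer auto

lemma pm_eval_map:
  assumes "c 0 = 0" "g 0 = 0"
  shows "pm_eval c v (Poly_Mapping.map g F) = pm_eval (c \<circ> g) v F"
proof -
  have "pm_eval c v (Poly_Mapping.map g F) =
      (\<Sum>alpha\<in>Poly_Mapping.keys F. c (g (Poly_Mapping.lookup F alpha)) * monomial_eval v alpha)"
    using pm_eval_superset[of c "Poly_Mapping.keys F"] assms by (simp add: lookup_map keys_map_subset)
  then show ?thesis
    by (simp add: pm_eval_def)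
qed

section \<open>The substitution q \<mapsto> 1 + q and the plethystic shift\<close>

interpretation sconst: comm_ring_hom sconst
  by unfold_locales (simp_all add: sconst_def single_add mult_single)

interpretation sym_const_poly: comm_ring_hom "\<lambda>c::rat poly. [:sconst c:]"
  by unfold_locales (simp_all add: sconst.hom_add sconst.hom_mult sconst.hom_one flip: one_pCons)

lemma qshift_single:
  "qshift (Poly_Mapping.single alpha c) = Poly_Mapping.single alpha (pcompose c [:1, 1:])"
  by (simp add: qshift_def)

interpretation qshift: comm_ring_hom qshift
proof
  have add: "qshift (F + G) = qshift F + qshift G" for F G
    unfolding qshift_def by (rule poly_mapping_eqI) (simp add: lookup_map lookup_add pcompose_add)
  show "qshift (F + G) = qshift F + qshift G" for F G
    by (fact add)
  show "qshift (F * G) = qshift F * qshift G" for F G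
    by (rule mult_hom_from_single) (simp_all add: add qshift_single mult_single pcompose_mult)
  show "qshift 1 = 1"
    using qshift_single[of 0 1] by (simp add: pcompose_1)
qed

interpretation map_poly_qshift: comm_ring_hom "map_poly qshift"
  by (rule comm_ring_hom_map_poly) (fact qshift.comm_ring_hom_axioms)

lemma qshift_sconst: "qshift (sconst c) = sconst (pcompose c [:1, 1:])"
  by (simp add: sconst_def qshift_single)

lemma qshift_pvar: "qshift (pvar k) = pvar k"
  by (simp add: pvar_def qshift_single pcompose_1)

lemma qshift_esym: "qshift (esym r) = esym r"
proof (induction r rule: less_induct)
  case (less r)
  show ?case
    by (subst (1 2) esym.simps)
      (auto simp: qshift.hom_mult qshift.hom_sum qshift.hom_one qshift_sconst qshift_pvar less.IH
        intro!: sum.cong)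
qed

lemma pm_eval_sconst: "c 0 = 0 \<Longrightarrow> pm_eval c v (sconst x) = c x"
  by (simp add: sconst_def pm_eval_single)

lemma pleth_shift_eq_pm_eval: "pleth_shift = pm_eval (\<lambda>c. [:sconst c:]) pleth_shift_var"
  by (simp add: fun_eq_iff pleth_shift_def pm_eval_def monomial_eval_def)

definition qshifted_pleth_var :: "nat \<Rightarrow> sym poly" where
  "qshifted_pleth_var k = [:pvar k:] + monom (sconst (smult ((-1) ^ k) (1 - [:1, 1:] ^ k))) k"

lemma map_poly_qshift_pleth_shift:
  "map_poly qshift (pleth_shift F) = pm_eval (\<lambda>c. [:sconst c:]) qshifted_pleth_var (qshift F)"
proof -
  have var: "map_poly qshift \<circ> pleth_shift_var = qshifted_pleth_var"
    by (simp add: fun_eq_iff pleth_shift_var_def qshifted_pleth_var_def map_poly_qshift.hom_add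
        map_poly_pCons map_poly_monom qshift.hom_zero qshift_pvar qshift_sconst pcompose_smult
        pcompose_diff pcompose_1 pcompose.hom_power pcompose_pCons)
  have coeff: "map_poly qshift \<circ> (\<lambda>c. [:sconst c:]) = (\<lambda>c. [:sconst c:]) \<circ> (\<lambda>c. pcompose c [:1, 1:])"
    by (simp add: fun_eq_iff map_poly_pCons qshift.hom_zero qshift_sconst)
  show ?thesis
    unfolding pleth_shift_eq_pm_eval map_poly_qshift.hom_pm_eval var coeff qshift_def
    by (rule pm_eval_map[symmetric]) (simp_all add: sconst.hom_zero)
qed

section \<open>Newton's relation\<close>

definition newton_rel :: "(nat \<Rightarrow> 'a::comm_ring_1) \<Rightarrow> (nat \<Rightarrow> 'a) \<Rightarrow> bool" where
  "newton_rel a s \<longleftrightarrow> (\<forall>k. of_nat k * a k = (\<Sum>j=0..k. a j * s (k - j)))"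

lemma newton_rel_fps_iff:
  "newton_rel a s \<longleftrightarrow> fps_X * fps_deriv (Abs_fps a) = Abs_fps a * Abs_fps s"
proof -
  have "fps_nth (fps_X * fps_deriv (Abs_fps a)) k = of_nat k * a k" for k
    by (cases k) auto
  then show ?thesis
    unfolding newton_rel_def fps_eq_iff by (simp add: fps_mult_nth)
qed

text \<open>With generating functions, \<open>newton_rel a s\<close> says that \<open>A = exp (\<integral> S / X)\<close>, so the
  relations multiply.\<close>

lemma newton_rel_convolution:
  assumes "newton_rel a s" "newton_rel b t"
  shows "newton_rel (\<lambda>m. \<Sum>k=0..m. a k * b (m - k)) (\<lambda>i. s i + t i)"
proof -
  have conv: "Abs_fps (\<lambda>m. \<Sum>k=0..m. a k * b (m - k)) = Abs_fps a * Abs_fps b"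
    by (simp add: fps_eq_iff fps_mult_nth)
  have plus: "Abs_fps (\<lambda>i. s i + t i) = Abs_fps s + Abs_fps t"
    by (simp add: fps_eq_iff)
  from assms have a: "fps_X * fps_deriv (Abs_fps a) = Abs_fps a * Abs_fps s"
    and b: "fps_X * fps_deriv (Abs_fps b) = Abs_fps b * Abs_fps t"
    by (simp_all add: newton_rel_fps_iff)
  have "fps_X * fps_deriv (Abs_fps a * Abs_fps b) =
      Abs_fps a * (fps_X * fps_deriv (Abs_fps b)) + fps_X * fps_deriv (Abs_fps a) * Abs_fps b"
    by (simp add: algebra_simps)
  also have "\<dots> = Abs_fps a * Abs_fps b * (Abs_fps s + Abs_fps t)"
    by (simp add: a b algebra_simps)
  finally show ?thesis
    by (simp add: newton_rel_fps_iff conv plus)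
qed

lemma newton_rel_monom_hom:
  assumes "comm_ring_hom f" "newton_rel a s"
  shows "newton_rel (\<lambda>k. monom (f (a k)) k) (\<lambda>k. monom (f (s k)) k)"
  unfolding newton_rel_def
proof
  interpret comm_ring_hom f by fact
  fix k
  have "(\<Sum>j=0..k. monom (f (a j)) j * monom (f (s (k - j))) (k - j)) =
      monom (f (\<Sum>j=0..k. a j * s (k - j))) k"
    by (simp add: mult_monom hom_sum hom_mult monom_sum)
  also have "\<dots> = monom (f (of_nat k * a k)) k"
    using assms(2) by (simp add: newton_rel_def)
  also have "\<dots> = of_nat k * monom (f (a k)) k"
    by (simp add: hom_mult hom_of_nat of_nat_poly smult_monom)
  finally show "of_nat k * monom (f (a k)) k =
      (\<Sum>j=0..k. monom (f (a j)) j * monom (f (s (k - j))) (k - j))" ..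
qed

lemma newton_rel_strict_sum:
  assumes "newton_rel a s" "s 0 = 0"
  shows "of_nat k * a k = (\<Sum>j<k. a j * s (k - j))"
proof -
  have "{0..k} = insert k {..<k}"
    by auto
  then show ?thesis
    using assms by (simp add: newton_rel_def)
qed

lemma newton_rel_unique:
  fixes a b s :: "nat \<Rightarrow> 'a::comm_ring_1"
  assumes "newton_rel a s" "newton_rel b s" "s 0 = 0" "a 0 = b 0"
    and cancel: "\<And>k (x::'a) y. 0 < k \<Longrightarrow> of_nat k * x = of_nat k * y \<Longrightarrow> x = y"
  shows "a k = b k"
proof (induction k rule: less_induct)
  case (less k)
  show ?case
  proof (cases "k = 0")
    case False
    have "of_nat k * a k = (\<Sum>j<k. a j * s (k - j))"
      using assms(1,3) by (rule newton_rel_strict_sum)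
    also have "\<dots> = (\<Sum>j<k. b j * s (k - j))"
      using less.IH by simp
    also have "\<dots> = of_nat k * b k"
      using assms(2,3) by (rule newton_rel_strict_sum[symmetric])
    finally show ?thesis
      using False cancel[of k "a k" "b k"] by simp
  qed (simp add: assms(4))
qed

lemma sum_reverse_convolution:
  fixes a s :: "nat \<Rightarrow> 'a::comm_ring_1"
  assumes "s 0 = 0"
  shows "(\<Sum>j=0..k. a j * s (k - j)) = (\<Sum>i=1..k. a (k - i) * s i)"
proof -
  have "(\<Sum>j=0..k. a j * s (k - j)) = (\<Sum>i=0..k. a (k - i) * s i)"
    using sum.atLeastAtMost_rev[of "\<lambda>j. a j * s (k - j)" 0 k] by (simp add: algebra_simps)
  also have "\<dots> = (\<Sum>i=1..k. a (k - i) * s i)"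
    by (simp add: sum.atLeast_Suc_atMost assms)
  finally show ?thesis .
qed

text \<open>The coefficients of \<open>(1 - t) / (1 - Q t)\<close>.\<close>

definition quot_geom_coeff :: "'a::comm_ring_1 \<Rightarrow> nat \<Rightarrow> 'a" where
  "quot_geom_coeff Q k = (if k = 0 then 1 else (Q - 1) * Q ^ (k - 1))"

lemma sum_quot_geom_coeff: "(\<Sum>j=0..k. quot_geom_coeff Q j) = Q ^ k"
  by (induction k) (simp_all add: quot_geom_coeff_def algebra_simps)

lemma newton_rel_quot_geom_coeff: "newton_rel (quot_geom_coeff Q) (\<lambda>i. Q ^ i - 1)"
  unfolding newton_rel_def
proof
  fix k
  show "of_nat k * quot_geom_coeff Q k = (\<Sum>j=0..k. quot_geom_coeff Q j * (Q ^ (k - j) - 1))"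
  proof (cases k)
    case 0
    then show ?thesis
      by (simp add: quot_geom_coeff_def)
  next
    case (Suc n)
    have "(\<Sum>j=Suc 0..k. quot_geom_coeff Q j * Q ^ (k - j)) = (\<Sum>j=Suc 0..k. (Q - 1) * Q ^ n)"
    proof (rule sum.cong)
      fix j
      assume "j \<in> {Suc 0..k}"
      then have "j - 1 + (k - j) = n" "j \<noteq> 0"
        using Suc by auto
      then show "quot_geom_coeff Q j * Q ^ (k - j) = (Q - 1) * Q ^ n"
        by (metis quot_geom_coeff_def mult.assoc power_add)
    qed simp
    then have "(\<Sum>j=0..k. quot_geom_coeff Q j * Q ^ (k - j)) = Q ^ k + of_nat k * ((Q - 1) * Q ^ n)"
      using Suc by (simp add: sum.atLeast_Suc_atMost quot_geom_coeff_def)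
    moreover have "(\<Sum>j=0..k. quot_geom_coeff Q j * (Q ^ (k - j) - 1)) =
        (\<Sum>j=0..k. quot_geom_coeff Q j * Q ^ (k - j)) - Q ^ k"
      by (simp add: right_diff_distrib sum_subtractf sum_quot_geom_coeff)
    ultimately show ?thesis
      using Suc by (simp add: quot_geom_coeff_def)
  qed
qed

section \<open>The shifted elementary symmetric functions\<close>

interpretation rat_const_sym: comm_ring_hom "\<lambda>x::rat. sconst [:x:]"
  using comm_ring_hom_comp[OF const_poly.comm_ring_hom_axioms sconst.comm_ring_hom_axioms]
  by (simp add: comp_def)

lemma esym_0: "esym 0 = 1"
  by (simp add: esym.simps)

lemma of_nat_mult_esym:
  "of_nat k * esym k = (\<Sum>i=1..k. (-1) ^ (i - 1) * esym (k - i) * pvar i)"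
proof (cases "k = 0")
  case False
  have "of_nat k * sconst [:1 / of_nat k:] = sconst [:of_nat k:] * sconst [:1 / of_nat k:]"
    by (simp add: rat_const_sym.hom_of_nat)
  also have "\<dots> = sconst [:of_nat k * (1 / of_nat k):]"
    by (simp flip: rat_const_sym.hom_mult)
  also have "\<dots> = 1"
    using False by (simp add: rat_const_sym.hom_one)
  finally have inverse: "of_nat k * sconst [:1 / of_nat k:] = 1" .
  have "of_nat k * esym k =
      (of_nat k * sconst [:1 / of_nat k:]) *
        (\<Sum>i\<in>{1..k}. sconst [:(-1) ^ (i - 1):] * esym (k - i) * pvar i)"
    using False by (subst esym.simps) (simp add: mult.assoc)
  then show ?thesis
    by (simp add: inverse const_poly.hom_power const_poly.hom_uminus sconst.hom_power
        sconst.hom_uminus sconst.hom_one flip: one_pCons)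
qed simp

lemma newton_rel_hom_esym:
  assumes "comm_ring_hom h"
  shows "newton_rel (h \<circ> esym) (\<lambda>i. if i = 0 then 0 else (-1) ^ (i - 1) * h (pvar i))"
  unfolding newton_rel_def
proof
  interpret comm_ring_hom h by fact
  fix k
  have "of_nat k * (h \<circ> esym) k = h (of_nat k * esym k)"
    by (simp add: hom_mult hom_of_nat)
  also have "\<dots> = (\<Sum>i=1..k. (-1) ^ (i - 1) * h (esym (k - i)) * h (pvar i))"
    by (simp add: of_nat_mult_esym hom_sum hom_mult hom_power hom_uminus hom_one)
  also have "\<dots> = (\<Sum>j=0..k. (h \<circ> esym) j *
      (if k - j = 0 then 0 else (-1) ^ (k - j - 1) * h (pvar (k - j))))"
    by (subst sum_reverse_convolution) (simp_all add: mult_ac)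
  finally show "of_nat k * (h \<circ> esym) k = (\<Sum>j=0..k. (h \<circ> esym) j *
      (if k - j = 0 then 0 else (-1) ^ (k - j - 1) * h (pvar (k - j))))" .
qed

definition shifted_esym :: "nat \<Rightarrow> sym poly" where
  "shifted_esym m =
     (\<Sum>k=0..m. [:esym k:] * monom (sconst (quot_geom_coeff [:1, 1:] (m - k))) (m - k))"

lemma sign_mult_qshifted_pleth_var:
  assumes "0 < i"
  shows "(-1) ^ (i - 1) * qshifted_pleth_var i =
    (-1) ^ (i - 1) * [:pvar i:] + monom (sconst ([:1, 1:] ^ i - 1)) i"
proof -
  have sign: "(-1 :: rat poly) ^ (i - 1) * (-1) ^ i = -1"
    using assms by (cases i) simp_all
  have smult_sign: "smult ((-1) ^ i) q = (-1) ^ i * q" for q :: "rat poly"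
    by (induction i) simp_all
  have "(-1 :: sym poly) ^ (i - 1) = [:sconst ((-1) ^ (i - 1)):]"
    by (simp add: sym_const_poly.hom_power sym_const_poly.hom_uminus sym_const_poly.hom_one)
  then have "(-1) ^ (i - 1) * monom (sconst (smult ((-1) ^ i) (1 - [:1, 1:] ^ i))) i =
      monom (sconst ((-1) ^ (i - 1) * (-1) ^ i * (1 - [:1, 1:] ^ i))) i"
    by (simp add: smult_monom smult_sign sconst.hom_mult mult.assoc)
  also have "\<dots> = monom (sconst ([:1, 1:] ^ i - 1)) i"
    by (simp only: sign) simp
  finally show ?thesis
    by (simp add: qshifted_pleth_var_def distrib_left)
qed

lemma pm_eval_esym:
  "pm_eval (\<lambda>c. [:sconst c:]) qshifted_pleth_var (esym m) = shifted_esym m"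
proof -
  let ?eval = "pm_eval (\<lambda>c. [:sconst c:]) qshifted_pleth_var"
  let ?s = "\<lambda>i. if i = 0 then 0 else (-1) ^ (i - 1) * [:pvar i:] :: sym poly"
  let ?t = "\<lambda>i. monom (sconst ([:1, 1:] ^ i - 1)) i"
  have eval: "comm_ring_hom ?eval"
    by (rule comm_ring_hom_pm_eval) (fact sym_const_poly.comm_ring_hom_axioms)
  have "newton_rel ((\<lambda>x. [:x:]) \<circ> esym) ?s"
    using newton_rel_hom_esym[OF const_poly.comm_ring_hom_axioms] .
  moreover have "newton_rel (\<lambda>k. monom (sconst (quot_geom_coeff [:1, 1:] k)) k) ?t"
    using newton_rel_monom_hom[OF sconst.comm_ring_hom_axioms newton_rel_quot_geom_coeff] .
  ultimately have shifted: "newton_rel shifted_esym (\<lambda>i. ?s i + ?t i)"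
    unfolding shifted_esym_def[abs_def] comp_def by (rule newton_rel_convolution)
  have "?eval (pvar i) = qshifted_pleth_var i" for i
    using sym_const_poly.hom_zero sym_const_poly.hom_one
    by (simp add: pvar_def pm_eval_single monomial_eval_def)
  then have "(\<lambda>i. if i = 0 then 0 else (-1) ^ (i - 1) * ?eval (pvar i)) = (\<lambda>i. ?s i + ?t i)"
    using sign_mult_qshifted_pleth_var by (auto simp: fun_eq_iff sconst.hom_zero simp del: mult_pCons_left)
  then have evaluated: "newton_rel (?eval \<circ> esym) (\<lambda>i. ?s i + ?t i)"
    using newton_rel_hom_esym[OF eval] by simp
  have cancel: "comm_ring_hom (\<lambda>x::rat. [:sconst [:x:]:])"
    using comm_ring_hom_comp[OF rat_const_sym.comm_ring_hom_axioms const_poly.comm_ring_hom_axioms]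
    by (simp add: comp_def)
  have "(?eval \<circ> esym) m = shifted_esym m"
  proof (rule newton_rel_unique[OF evaluated shifted])
    show "(?eval \<circ> esym) 0 = shifted_esym 0"
      using comm_ring_hom.hom_one[OF eval]
      by (simp add: esym_0 shifted_esym_def quot_geom_coeff_def sconst.hom_one flip: one_pCons)
    show "of_nat k * x = of_nat k * y \<Longrightarrow> 0 < k \<Longrightarrow> x = y" for k and x y :: "sym poly"
      by (rule of_nat_mult_cancel_by_hom[OF cancel])
  qed (simp add: sconst.hom_zero)
  then show ?thesis
    by simp
qed
section \<open>e-positivity\<close>

definition nat_poly :: "'a::comm_semiring_1 poly \<Rightarrow> bool" where
  "nat_poly c \<longleftrightarrow> (\<forall>i. coeff c i \<in> \<nat>)"

lemma sum_in_Nats: "(\<And>a. a \<in> A \<Longrightarrow> f a \<in> \<nat>) \<Longrightarrow> sum f A \<in> \<nat>"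
  by (induction A rule: infinite_finite_induct) auto

lemma nat_poly_0: "nat_poly 0"
  by (simp add: nat_poly_def)

lemma nat_poly_1: "nat_poly 1"
  by (simp add: nat_poly_def coeff_1)

lemma nat_poly_add: "nat_poly a \<Longrightarrow> nat_poly b \<Longrightarrow> nat_poly (a + b)"
  by (simp add: nat_poly_def)

lemma nat_poly_mult: "nat_poly a \<Longrightarrow> nat_poly b \<Longrightarrow> nat_poly (a * b)"
  unfolding nat_poly_def coeff_mult by (auto intro!: sum_in_Nats)

lemma nat_poly_power: "nat_poly a \<Longrightarrow> nat_poly (a ^ n)"
  by (induction n) (auto intro: nat_poly_1 nat_poly_mult)

lemma nat_poly_linear: "nat_poly [:a, b:] \<longleftrightarrow> a \<in> \<nat> \<and> b \<in> \<nat>"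
  by (auto simp: nat_poly_def coeff_pCons split: nat.splits)

text \<open>This is where \<open>q \<mapsto> 1 + q\<close> is needed: at \<open>Q = 1 + q\<close> the coefficients
  \<open>q (1 + q) ^ (j - 1)\<close> have nonnegative coefficients.\<close>

lemma nat_poly_quot_geom_coeff: "nat_poly (quot_geom_coeff [:1, 1 :: 'a::comm_ring_1:] k)"
proof (cases "k = 0")
  case False
  have "quot_geom_coeff [:1, 1:] k = [:0, 1:] * [:1, 1 :: 'a:] ^ (k - 1)"
    using False by (simp add: quot_geom_coeff_def one_pCons)
  moreover have "nat_poly ([:0, 1:] * [:1, 1:] ^ (k - 1))"
    by (intro nat_poly_mult nat_poly_power) (simp_all add: nat_poly_linear)
  ultimately show ?thesis
    by simp
qed (simp add: quot_geom_coeff_def nat_poly_1)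

inductive e_positive :: "nat \<Rightarrow> sym \<Rightarrow> bool" for n where
  e_positive_zero: "e_positive n 0"
| e_positive_term: "nat_poly c \<Longrightarrow> mu \<in> partitions n \<Longrightarrow> e_positive n (sconst c * emult mu)"
| e_positive_add: "e_positive n F \<Longrightarrow> e_positive n G \<Longrightarrow> e_positive n (F + G)"

lemma e_positive_sum: "(\<And>a. a \<in> A \<Longrightarrow> e_positive n (f a)) \<Longrightarrow> e_positive n (sum f A)"
  by (induction A rule: infinite_finite_induct) (auto intro: e_positive_zero e_positive_add)

lemma partitions_add: "mu \<in> partitions n \<Longrightarrow> nu \<in> partitions m \<Longrightarrow> mu + nu \<in> partitions (n + m)"
  by (auto simp: partitions_def)

lemma e_positive_mult_term:
  assumes "nat_poly c" "mu \<in> partitions n" "e_positive m G"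
  shows "e_positive (n + m) (sconst c * emult mu * G)"
  using assms(3)
proof (induction rule: e_positive.induct)
  case e_positive_zero
  then show ?case
    by (simp add: e_positive.e_positive_zero)
next
  case (e_positive_term d nu)
  have "sconst c * emult mu * (sconst d * emult nu) = sconst (c * d) * emult (mu + nu)"
    by (simp add: sconst.hom_mult emult_def mult_ac)
  then show ?case
    using assms e_positive_term by (auto intro!: e_positive.e_positive_term nat_poly_mult partitions_add)
next
  case (e_positive_add F G)
  then show ?case
    by (simp add: distrib_left e_positive.e_positive_add)
qed

lemma e_positive_mult: "e_positive n F \<Longrightarrow> e_positive m G \<Longrightarrow> e_positive (n + m) (F * G)"
proof (induction rule: e_positive.induct)
  case e_positive_zero
  then show ?case
    by (simp add: e_positive.e_positive_zero)
next
  case (e_positive_term c mu)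
  then show ?case
    by (rule e_positive_mult_term)
next
  case (e_positive_add F1 F2)
  then show ?case
    by (simp add: distrib_right e_positive.e_positive_add)
qed

lemma e_positive_sconst: "nat_poly c \<Longrightarrow> e_positive 0 (sconst c)"
  using e_positive_term[of c "{#}" 0] by (simp add: partitions_def emult_def)

lemma e_positive_esym: "e_positive n (esym n)"
proof (cases "n = 0")
  case True
  then show ?thesis
    using e_positive_sconst[OF nat_poly_1] by (simp add: esym_0 sconst.hom_one)
next
  case False
  then have "e_positive n (sconst 1 * emult {#n#})"
    by (intro e_positive_term) (auto simp: nat_poly_1 partitions_def)
  then show ?thesis
    by (simp add: sconst.hom_one emult_def)
qed

lemma size_le_sum_mset: "(\<forall>x\<in>#M. 0 < x) \<Longrightarrow> size M \<le> sum_mset (M :: nat multiset)"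
  by (induction M) auto

lemma member_le_sum_mset: "x \<in># M \<Longrightarrow> x \<le> sum_mset (M :: nat multiset)"
  by (induction M) auto

lemma finite_partitions: "finite (partitions n)"
proof (rule finite_subset)
  show "partitions n \<subseteq> (\<Union>s\<le>n. multisets_of_size {..n} s)"
  proof
    fix mu
    assume "mu \<in> partitions n"
    then have "\<forall>x\<in>#mu. 0 < x" "sum_mset mu = n"
      by (auto simp: partitions_def)
    then have "size mu \<le> n" "set_mset mu \<subseteq> {..n}"
      using size_le_sum_mset member_le_sum_mset by fastforce+
    then show "mu \<in> (\<Union>s\<le>n. multisets_of_size {..n} s)"
      by (auto simp: multisets_of_size_def)
  qed
qed (auto simp: finite_multisets_of_size)

lemma e_positive_imp_sum_emult:
  assumes "e_positive n F"
  shows "\<exists>P. (\<forall>mu\<in>partitions n. nat_poly (P mu)) \<and>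
    F = (\<Sum>mu\<in>partitions n. sconst (P mu) * emult mu)"
  using assms
proof (induction rule: e_positive.induct)
  case e_positive_zero
  show ?case
    by (rule exI[of _ "\<lambda>_. 0"]) (simp add: nat_poly_0 sconst.hom_zero)
next
  case (e_positive_term c mu)
  have "(\<Sum>nu\<in>partitions n. sconst (if nu = mu then c else 0) * emult nu) = sconst c * emult mu"
    using e_positive_term finite_partitions
    by (simp add: sconst.hom_zero if_distrib[of sconst] if_distrib[of "\<lambda>x. x * _"] sum.delta' cong: if_cong)
  then show ?case
    using e_positive_term by (intro exI[of _ "\<lambda>nu. if nu = mu then c else 0"]) (simp add: nat_poly_0)
next
  case (e_positive_add F G)
  then obtain P1 P2 where
    "\<forall>mu\<in>partitions n. nat_poly (P1 mu)" "F = (\<Sum>mu\<in>partitions n. sconst (P1 mu) * emult mu)"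
    "\<forall>mu\<in>partitions n. nat_poly (P2 mu)" "G = (\<Sum>mu\<in>partitions n. sconst (P2 mu) * emult mu)"
    by blast
  then show ?case
    by (intro exI[of _ "\<lambda>mu. P1 mu + P2 mu"])
      (simp add: nat_poly_add sconst.hom_add distrib_right sum.distrib)
qed

text \<open>Polynomials in \<open>w\<close> that are e-positive of total degree \<open>n\<close>, where \<open>w\<close> has degree 1.\<close>

definition e_positive_poly :: "nat \<Rightarrow> sym poly \<Rightarrow> bool" where
  "e_positive_poly n G \<longleftrightarrow> (\<forall>j\<le>n. e_positive (n - j) (coeff G j)) \<and> degree G \<le> n"

lemma e_positive_poly_zero: "e_positive_poly n 0"
  by (simp add: e_positive_poly_def e_positive_zero)

lemma e_positive_poly_add:
  "e_positive_poly n G \<Longrightarrow> e_positive_poly n H \<Longrightarrow> e_positive_poly n (G + H)"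
  by (simp add: e_positive_poly_def e_positive_add degree_add_le)

lemma e_positive_poly_sum:
  "(\<And>a. a \<in> A \<Longrightarrow> e_positive_poly n (f a)) \<Longrightarrow> e_positive_poly n (sum f A)"
  by (induction A rule: infinite_finite_induct) (auto intro: e_positive_poly_zero e_positive_poly_add)

lemma e_positive_poly_monom: "j \<le> n \<Longrightarrow> e_positive (n - j) F \<Longrightarrow> e_positive_poly n (monom F j)"
  by (auto simp: e_positive_poly_def coeff_monom e_positive_zero intro: order.trans[OF degree_monom_le])

lemma e_positive_poly_const: "e_positive n F \<Longrightarrow> e_positive_poly n [:F:]"
  using e_positive_poly_monom[of 0 n F] by (simp add: monom_0)

lemma e_positive_poly_mult:
  assumes G: "e_positive_poly n G" and H: "e_positive_poly m H"
  shows "e_positive_poly (n + m) (G * H)"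
  unfolding e_positive_poly_def
proof (intro conjI allI impI)
  fix k
  assume k: "k \<le> n + m"
  show "e_positive (n + m - k) (coeff (G * H) k)"
    unfolding coeff_mult
  proof (rule e_positive_sum)
    fix i
    assume "i \<in> {..k}"
    show "e_positive (n + m - k) (coeff G i * coeff H (k - i))"
    proof (cases "i \<le> n \<and> k - i \<le> m")
      case True
      then have "e_positive (n - i + (m - (k - i))) (coeff G i * coeff H (k - i))"
        using G H by (intro e_positive_mult) (auto simp: e_positive_poly_def)
      moreover have "n - i + (m - (k - i)) = n + m - k"
        using True \<open>i \<in> {..k}\<close> k by auto
      ultimately show ?thesis
        by simp
    next
      case False
      then have "coeff G i = 0 \<or> coeff H (k - i) = 0"
        using G H by (auto simp: e_positive_poly_def coeff_eq_0)
      then show ?thesis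
        by (auto intro: e_positive_zero)
    qed
  qed
next
  show "degree (G * H) \<le> n + m"
    using G H degree_mult_le[of G H] by (simp add: e_positive_poly_def)
qed

lemma e_positive_poly_shifted_esym: "e_positive_poly m (shifted_esym m)"
  unfolding shifted_esym_def
proof (rule e_positive_poly_sum)
  fix k
  assume "k \<in> {0..m}"
  then have "e_positive (m - (m - k)) (esym k * sconst (quot_geom_coeff [:1, 1:] (m - k)))"
    using e_positive_mult[OF e_positive_esym e_positive_sconst[OF nat_poly_quot_geom_coeff]] by simp
  then show "e_positive_poly m ([:esym k:] * monom (sconst (quot_geom_coeff [:1, 1:] (m - k))) (m - k))"
    by (simp add: e_positive_poly_monom smult_monom)
qed

lemma e_positive_poly_pm_eval:
  assumes "e_positive n F"
  shows "e_positive_poly n (pm_eval (\<lambda>c. [:sconst c:]) qshifted_pleth_var F)"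
  using assms
proof (induction rule: e_positive.induct)
  interpret eval: comm_ring_hom "pm_eval (\<lambda>c. [:sconst c:]) qshifted_pleth_var"
    by (rule comm_ring_hom_pm_eval) (fact sym_const_poly.comm_ring_hom_axioms)
  {
    case e_positive_zero
    show ?case
      by (simp add: eval.hom_zero e_positive_poly_zero)
  next
    case (e_positive_term c mu)
    have "e_positive_poly (sum_mset mu)
        (prod_mset (image_mset (\<lambda>x. pm_eval (\<lambda>c. [:sconst c:]) qshifted_pleth_var (esym x)) mu))"
    proof (induction mu)
      case empty
      then show ?case
        using e_positive_poly_const[OF e_positive_sconst[OF nat_poly_1]]
        by (simp add: sconst.hom_one flip: one_pCons)
    next
      case (add x mu)
      then show ?case
        using e_positive_poly_mult[OF e_positive_poly_shifted_esym add.IH] by (simp add: pm_eval_esym)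
    qed
    moreover have "pm_eval (\<lambda>c. [:sconst c:]) qshifted_pleth_var (sconst c * emult mu) =
        [:sconst c:] * prod_mset (image_mset (\<lambda>x. pm_eval (\<lambda>c. [:sconst c:]) qshifted_pleth_var (esym x)) mu)"
      by (simp add: eval.hom_mult eval.hom_prod_mset emult_def pm_eval_sconst
          sym_const_poly.hom_zero multiset.map_comp comp_def)
    ultimately have "e_positive_poly (0 + sum_mset mu)
        (pm_eval (\<lambda>c. [:sconst c:]) qshifted_pleth_var (sconst c * emult mu))"
      using e_positive_poly_mult[OF e_positive_poly_const[OF e_positive_sconst[OF e_positive_term(1)]]]
      by simp
    then show ?case
      using e_positive_term(2) by (simp add: partitions_def)
  next
    case (e_positive_add F G)
    then show ?case
      by (simp add: eval.hom_add e_positive_poly_add)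
  }
qed

lemma e_positive_qshift_Bop:
  assumes "e_positive n (qshift F)"
  shows "e_positive (a + n) (qshift (Bop a F))"
proof -
  let ?G = "map_poly qshift (pleth_shift F)"
  have G: "e_positive_poly n ?G"
    using e_positive_poly_pm_eval[OF assms] by (simp add: map_poly_qshift_pleth_shift)
  have "qshift (Bop a F) = (\<Sum>j\<le>degree (pleth_shift F). coeff ?G j * esym (a + j))"
    by (simp add: Bop_def Let_def qshift.hom_sum qshift.hom_mult qshift_esym coeff_map_poly qshift.hom_zero)
  also have "e_positive (a + n) \<dots>"
  proof (rule e_positive_sum)
    fix j
    show "e_positive (a + n) (coeff ?G j * esym (a + j))"
    proof (cases "j \<le> n")
      case True
      then have "e_positive (n - j + (a + j)) (coeff ?G j * esym (a + j))"
        using G by (intro e_positive_mult e_positive_esym) (simp add: e_positive_poly_def)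
      then show ?thesis
        using True by (simp add: add.commute)
    next
      case False
      then show ?thesis
        using G by (simp add: e_positive_poly_def coeff_eq_0 e_positive_zero)
    qed
  qed
  finally show ?thesis .
qed

lemma e_positive_qshift_Bcomp: "e_positive (sum_list p) (qshift (Bcomp p))"
proof (induction p)
  case Nil
  then show ?case
    using e_positive_sconst[OF nat_poly_1] by (simp add: Bcomp_def qshift.hom_one sconst.hom_one)
next
  case (Cons a p)
  then show ?case
    using e_positive_qshift_Bop[OF Cons.IH, of a] by (simp add: Bcomp_def)
qed

theorem theorem2p1:
  fixes p :: "nat list"
  assumes "\<forall>x\<in>set p. 0 < x"
  shows "\<exists>P :: nat multiset \<Rightarrow> rat poly.
           (\<forall>mu\<in>partitions (sum_list p). \<forall>i. coeff (P mu) i \<in> \<nat>) \<and>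
           qshift (Bcomp p) = (\<Sum>mu\<in>partitions (sum_list p). sconst (P mu) * emult mu)"
  using e_positive_imp_sum_emult[OF e_positive_qshift_Bcomp[of p]] unfolding nat_poly_def .

end
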